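(* Consider a tabular finite MDP and a full-support policy $\pi$. Let $\pi'(a|s)=\pi(a|s)e^{\eta f_a(s)}/Z_s$ with $\eta>0$, where $f_a(s):=[U_a(s)]_+$ and $Z_s:=\sum_{a'}\pi(a'|s)e^{\eta f_{a'}(s)}$. Then \[ V(\pi')-V(\pi)=\frac{1}{1-\gamma}\sum_{s\in\mathcal S}d_\rho^{\pi'}(s)\,\frac1{Z_s}\sum_{i:\,U_i(s)>0}\pi(i|s)U_i(s)\big(e^{\eta U_i(s)}-1\big)\;\ge\;0. \]
   Context: A finite MDP $(\mathcal S,\mathcal A,P,r,\gamma,\rho)$ with $\gamma\in[0,1)$; $V^\pi,Q^\pi$ discounted value functions, $V(\pi)=\mathbb{E}_{s\sim\rho}V^\pi(s)$, $d_\rho^\pi(s)=(1-\gamma)\sum_{t\ge0}\gamma^t\Pr(s_t=s\mid\rho,\pi)$. $U_a(s):=Q^\pi(s,a)-V^\pi(s)$ (advantage under the current policy $\pi$), $[x]_+=\max(x,0)$. *)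

theory Defs
  imports "HOL-Analysis.Analysis"
begin

text \<open>Tabular finite MDP: finite state type 's, finite action type 'a.
  P s a s' = transition probability, r s a = reward, pol s a = pi(a|s),
  distributions over states are functions 's => real.\<close>

definition is_dist :: "('b::finite \<Rightarrow> real) \<Rightarrow> bool" where
  "is_dist p \<longleftrightarrow> (\<forall>x. 0 \<le> p x) \<and> (\<Sum>x\<in>UNIV. p x) = 1"

definition is_kernel :: "('s::finite \<Rightarrow> 'a::finite \<Rightarrow> 's \<Rightarrow> real) \<Rightarrow> bool" where
  "is_kernel P \<longleftrightarrow> (\<forall>s a. is_dist (P s a))"

definition is_policy :: "('s::finite \<Rightarrow> 'a::finite \<Rightarrow> real) \<Rightarrow> bool" where
  "is_policy pol \<longleftrightarrow> (\<forall>s. is_dist (pol s))"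

definition step_dist ::
  "('s::finite \<Rightarrow> 'a::finite \<Rightarrow> 's \<Rightarrow> real) \<Rightarrow> ('s \<Rightarrow> 'a \<Rightarrow> real) \<Rightarrow> ('s \<Rightarrow> real) \<Rightarrow> ('s \<Rightarrow> real)" where
  "step_dist P pol \<mu> = (\<lambda>s'. \<Sum>s\<in>UNIV. \<Sum>a\<in>UNIV. \<mu> s * pol s a * P s a s')"

definition state_dist ::
  "('s::finite \<Rightarrow> 'a::finite \<Rightarrow> 's \<Rightarrow> real) \<Rightarrow> ('s \<Rightarrow> 'a \<Rightarrow> real) \<Rightarrow> ('s \<Rightarrow> real) \<Rightarrow> nat \<Rightarrow> ('s \<Rightarrow> real)" where
  "state_dist P pol \<mu> t = (step_dist P pol ^^ t) \<mu>"

definition Vfun ::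
  "('s::finite \<Rightarrow> 'a::finite \<Rightarrow> 's \<Rightarrow> real) \<Rightarrow> ('s \<Rightarrow> 'a \<Rightarrow> real) \<Rightarrow> real \<Rightarrow> ('s \<Rightarrow> 'a \<Rightarrow> real) \<Rightarrow> 's \<Rightarrow> real" where
  "Vfun P r \<gamma> pol s = (\<Sum>t. \<gamma> ^ t * (\<Sum>s'\<in>UNIV. state_dist P pol (\<lambda>x. if x = s then 1 else 0) t s'
                                          * (\<Sum>a\<in>UNIV. pol s' a * r s' a)))"

definition Qfun ::
  "('s::finite \<Rightarrow> 'a::finite \<Rightarrow> 's \<Rightarrow> real) \<Rightarrow> ('s \<Rightarrow> 'a \<Rightarrow> real) \<Rightarrow> real \<Rightarrow> ('s \<Rightarrow> 'a \<Rightarrow> real) \<Rightarrow> 's \<Rightarrow> 'a \<Rightarrow> real" where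
  "Qfun P r \<gamma> pol s a = r s a + \<gamma> * (\<Sum>s'\<in>UNIV. P s a s' * Vfun P r \<gamma> pol s')"

definition Vtot ::
  "('s::finite \<Rightarrow> 'a::finite \<Rightarrow> 's \<Rightarrow> real) \<Rightarrow> ('s \<Rightarrow> 'a \<Rightarrow> real) \<Rightarrow> real \<Rightarrow> ('s \<Rightarrow> real) \<Rightarrow> ('s \<Rightarrow> 'a \<Rightarrow> real) \<Rightarrow> real" where
  "Vtot P r \<gamma> \<rho> pol = (\<Sum>s\<in>UNIV. \<rho> s * Vfun P r \<gamma> pol s)"

definition occ ::
  "('s::finite \<Rightarrow> 'a::finite \<Rightarrow> 's \<Rightarrow> real) \<Rightarrow> real \<Rightarrow> ('s \<Rightarrow> real) \<Rightarrow> ('s \<Rightarrow> 'a \<Rightarrow> real) \<Rightarrow> 's \<Rightarrow> real" where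
  "occ P \<gamma> \<rho> pol s = (1 - \<gamma>) * (\<Sum>t. \<gamma> ^ t * state_dist P pol \<rho> t s)"

end

theory Submission
  imports Defs
begin

(* The equality is the performance difference lemma for the advantage U of pi under pi':
   writing W t = gamma^t E[V^pi(s_t)] with s_t distributed according to pi', the one-step
   Bellman identity for Q^pi gives gamma^t E[sum_a pi'(a|s_t) U_a(s_t)]
   = gamma^t E[r under pi'] + W (t+1) - W t, and summing over t telescopes to V(pi') - V(pi).
   Since U has pi-mean zero, subtracting that mean from the pi'-mean of U cancels all actions
   with U_a(s) <= 0 (for which pi' only renormalises pi), leaving
   (1/Z_s) sum_{U_i > 0} pi(i|s) U_i (e^(eta U_i) - 1), a sum of nonnegative terms. *)

lemma is_dist_nonneg: "is_dist \<mu> \<Longrightarrow> 0 \<le> \<mu> x"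
  by (simp add: is_dist_def)

lemma is_dist_le_1:
  assumes "is_dist \<mu>"
  shows "\<mu> x \<le> 1"
proof -
  have "\<mu> x \<le> (\<Sum>y\<in>UNIV. \<mu> y)"
    using assms by (intro member_le_sum) (auto simp: is_dist_def)
  with assms show ?thesis by (simp add: is_dist_def)
qed

lemma abs_expectation_le:
  assumes "is_dist \<mu>"
  shows "\<bar>\<Sum>x\<in>UNIV. \<mu> x * h x\<bar> \<le> (\<Sum>x\<in>UNIV. \<bar>h x\<bar>)"
proof -
  have "\<bar>\<Sum>x\<in>UNIV. \<mu> x * h x\<bar> \<le> (\<Sum>x\<in>UNIV. \<bar>\<mu> x * h x\<bar>)"
    by (rule sum_abs)
  also have "\<dots> \<le> (\<Sum>x\<in>UNIV. \<bar>h x\<bar>)"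
    using is_dist_nonneg[OF assms] is_dist_le_1[OF assms]
    by (intro sum_mono) (simp add: abs_mult mult_left_le_one_le)
  finally show ?thesis .
qed

lemma is_dist_indicator: "is_dist (\<lambda>x. if x = s then 1 else 0)"
  by (simp add: is_dist_def)

lemma sum_indicator_mult:
  fixes h :: "'b::finite \<Rightarrow> real"
  shows "(\<Sum>x\<in>UNIV. (if x = s then 1 else 0) * h x) = h s"
proof -
  have "(if x = s then 1 else 0) * h x = (if x = s then h s else 0)" for x
    by simp
  then show ?thesis by simp
qed

lemma sum_step_dist_mult:
  "(\<Sum>x\<in>UNIV. step_dist P pol \<mu> x * h x)
     = (\<Sum>y\<in>UNIV. \<mu> y * (\<Sum>a\<in>UNIV. pol y a * (\<Sum>x\<in>UNIV. P y a x * h x)))"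
proof -
  have "(\<Sum>x\<in>UNIV. step_dist P pol \<mu> x * h x)
      = (\<Sum>x\<in>UNIV. \<Sum>y\<in>UNIV. \<Sum>a\<in>UNIV. \<mu> y * (pol y a * (P y a x * h x)))"
    by (simp only: step_dist_def sum_distrib_right mult.assoc)
  also have "\<dots> = (\<Sum>y\<in>UNIV. \<Sum>a\<in>UNIV. \<Sum>x\<in>UNIV. \<mu> y * (pol y a * (P y a x * h x)))"
    by (subst sum.swap) (intro sum.cong[OF refl] sum.swap)
  also have "\<dots> = (\<Sum>y\<in>UNIV. \<mu> y * (\<Sum>a\<in>UNIV. pol y a * (\<Sum>x\<in>UNIV. P y a x * h x)))"
    by (simp add: sum_distrib_left)
  finally show ?thesis .
qed

lemma is_dist_step_dist:
  assumes "is_kernel P" "is_policy pol" "is_dist \<mu>"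
  shows "is_dist (step_dist P pol \<mu>)"
proof -
  have "(\<Sum>x\<in>UNIV. step_dist P pol \<mu> x) = (\<Sum>y\<in>UNIV. \<mu> y * (\<Sum>a\<in>UNIV. pol y a * (\<Sum>x\<in>UNIV. P y a x)))"
    using sum_step_dist_mult[of P pol \<mu> "\<lambda>_. 1"] by simp
  also have "\<dots> = 1"
    using assms by (simp add: is_kernel_def is_policy_def is_dist_def)
  finally show ?thesis
    using assms unfolding is_dist_def step_dist_def is_kernel_def is_policy_def
    by (auto intro!: sum_nonneg)
qed

lemma state_dist_0 [simp]: "state_dist P pol \<mu> 0 = \<mu>"
  by (simp add: state_dist_def)

lemma state_dist_Suc: "state_dist P pol \<mu> (Suc t) = step_dist P pol (state_dist P pol \<mu> t)"
  by (simp add: state_dist_def)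

lemma state_dist_Suc_right: "state_dist P pol \<mu> (Suc t) = state_dist P pol (step_dist P pol \<mu>) t"
  by (simp add: state_dist_def funpow_Suc_right del: funpow.simps)

lemma is_dist_state_dist:
  assumes "is_kernel P" "is_policy pol" "is_dist \<mu>"
  shows "is_dist (state_dist P pol \<mu> t)"
  by (induction t) (use assms in \<open>auto simp: state_dist_Suc intro: is_dist_step_dist\<close>)

lemma state_dist_mixture:
  "state_dist P pol \<mu> t y = (\<Sum>s\<in>UNIV. \<mu> s * state_dist P pol (\<lambda>x. if x = s then 1 else 0) t y)"
proof (induction t arbitrary: y)
  case 0
  show ?case by (simp add: if_distrib cong: if_cong)
next
  case (Suc t)
  let ?d = "\<lambda>s. state_dist P pol (\<lambda>x. if x = s then 1 else 0) t"
  have "state_dist P pol \<mu> (Suc t) y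
      = (\<Sum>x\<in>UNIV. \<Sum>a\<in>UNIV. \<Sum>s\<in>UNIV. \<mu> s * (?d s x * (pol x a * P x a y)))"
    by (simp only: state_dist_Suc step_dist_def Suc.IH sum_distrib_right mult.assoc)
  also have "\<dots> = (\<Sum>s\<in>UNIV. \<Sum>x\<in>UNIV. \<Sum>a\<in>UNIV. \<mu> s * (?d s x * (pol x a * P x a y)))"
    by (subst sum.swap) (intro sum.cong[OF refl] sum.swap)
  also have "\<dots> = (\<Sum>s\<in>UNIV. \<mu> s * state_dist P pol (\<lambda>x. if x = s then 1 else 0) (Suc t) y)"
    by (simp only: state_dist_Suc step_dist_def sum_distrib_left mult.assoc)
  finally show ?case .
qed

lemma summable_discounted_expectation:
  fixes \<gamma> :: real
  assumes "0 \<le> \<gamma>" "\<gamma> < 1" "\<And>t. is_dist (\<mu> t)"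
  shows "summable (\<lambda>t. \<gamma> ^ t * (\<Sum>x\<in>UNIV. \<mu> t x * h x))"
proof (rule summable_comparison_test)
  show "\<exists>N. \<forall>t\<ge>N. norm (\<gamma> ^ t * (\<Sum>x\<in>UNIV. \<mu> t x * h x)) \<le> \<gamma> ^ t * (\<Sum>x\<in>UNIV. \<bar>h x\<bar>)"
    using abs_expectation_le[OF assms(3)] assms(1)
    by (auto simp: abs_mult intro!: mult_left_mono)
  show "summable (\<lambda>t. \<gamma> ^ t * (\<Sum>x\<in>UNIV. \<bar>h x\<bar>))"
    using assms by (intro summable_mult2 summable_geometric) auto
qed

lemma Vtot_indicator: "Vtot P r \<gamma> (\<lambda>x. if x = s then 1 else 0) pol = Vfun P r \<gamma> pol s"
  by (simp add: Vtot_def sum_indicator_mult)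

lemma Vtot_sums:
  fixes \<gamma> :: real
  assumes "is_kernel P" "is_policy pol" "0 \<le> \<gamma>" "\<gamma> < 1"
  shows "(\<lambda>t. \<gamma> ^ t * (\<Sum>y\<in>UNIV. state_dist P pol \<mu> t y * (\<Sum>a\<in>UNIV. pol y a * r y a)))
           sums Vtot P r \<gamma> \<mu> pol"
proof -
  let ?R = "\<lambda>y. \<Sum>a\<in>UNIV. pol y a * r y a"
  let ?d = "\<lambda>s. state_dist P pol (\<lambda>x. if x = s then 1 else 0)"
  have "(\<lambda>t. \<gamma> ^ t * (\<Sum>y\<in>UNIV. ?d s t y * ?R y)) sums Vfun P r \<gamma> pol s" for s
    unfolding Vfun_def using assms
    by (intro summable_sums summable_discounted_expectation is_dist_state_dist is_dist_indicator)
  then have "(\<lambda>t. \<Sum>s\<in>UNIV. \<mu> s * (\<gamma> ^ t * (\<Sum>y\<in>UNIV. ?d s t y * ?R y))) sums Vtot P r \<gamma> \<mu> pol"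
    unfolding Vtot_def by (intro sums_sum sums_mult)
  moreover have "\<gamma> ^ t * (\<Sum>y\<in>UNIV. state_dist P pol \<mu> t y * ?R y)
      = (\<Sum>s\<in>UNIV. \<mu> s * (\<gamma> ^ t * (\<Sum>y\<in>UNIV. ?d s t y * ?R y)))" for t
  proof -
    have "\<gamma> ^ t * (\<Sum>y\<in>UNIV. state_dist P pol \<mu> t y * ?R y)
        = \<gamma> ^ t * (\<Sum>y\<in>UNIV. \<Sum>s\<in>UNIV. \<mu> s * ?d s t y * ?R y)"
      by (subst state_dist_mixture) (simp only: sum_distrib_right)
    also have "\<dots> = \<gamma> ^ t * (\<Sum>s\<in>UNIV. \<Sum>y\<in>UNIV. \<mu> s * ?d s t y * ?R y)"
      by (subst sum.swap) (rule refl)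
    also have "\<dots> = (\<Sum>s\<in>UNIV. \<mu> s * (\<gamma> ^ t * (\<Sum>y\<in>UNIV. ?d s t y * ?R y)))"
      by (simp only: sum_distrib_left mult_ac)
    finally show ?thesis .
  qed
  ultimately show ?thesis by simp
qed

lemma Vtot_bellman:
  fixes \<gamma> :: real
  assumes "is_kernel P" "is_policy pol" "0 \<le> \<gamma>" "\<gamma> < 1"
  shows "Vtot P r \<gamma> \<mu> pol
           = (\<Sum>y\<in>UNIV. \<mu> y * (\<Sum>a\<in>UNIV. pol y a * r y a)) + \<gamma> * Vtot P r \<gamma> (step_dist P pol \<mu>) pol"
proof -
  let ?f = "\<lambda>t. \<gamma> ^ t * (\<Sum>y\<in>UNIV. state_dist P pol \<mu> t y * (\<Sum>a\<in>UNIV. pol y a * r y a))"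
  have "(\<lambda>t. \<gamma> * (\<gamma> ^ t * (\<Sum>y\<in>UNIV. state_dist P pol (step_dist P pol \<mu>) t y
            * (\<Sum>a\<in>UNIV. pol y a * r y a))))
         sums (\<gamma> * Vtot P r \<gamma> (step_dist P pol \<mu>) pol)"
    by (intro sums_mult Vtot_sums assms)
  then have "(\<lambda>t. ?f (Suc t)) sums (\<gamma> * Vtot P r \<gamma> (step_dist P pol \<mu>) pol)"
    by (simp only: state_dist_Suc_right power_Suc mult.assoc)
  then have "?f sums (\<gamma> * Vtot P r \<gamma> (step_dist P pol \<mu>) pol + ?f 0)"
    using sums_Suc_iff[of ?f] by blast
  with Vtot_sums[OF assms] show ?thesis
    by (simp add: sums_iff)
qed

lemma Vfun_eq_sum_Qfun:
  fixes \<gamma> :: real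
  assumes "is_kernel P" "is_policy pol" "0 \<le> \<gamma>" "\<gamma> < 1"
  shows "Vfun P r \<gamma> pol s = (\<Sum>a\<in>UNIV. pol s a * Qfun P r \<gamma> pol s a)"
proof -
  let ?\<delta> = "\<lambda>x. if x = s then 1 else 0 :: real"
  have "Vfun P r \<gamma> pol s = (\<Sum>a\<in>UNIV. pol s a * r s a) + \<gamma> * Vtot P r \<gamma> (step_dist P pol ?\<delta>) pol"
    using Vtot_bellman[OF assms, of r ?\<delta>] by (simp add: Vtot_indicator sum_indicator_mult)
  also have "Vtot P r \<gamma> (step_dist P pol ?\<delta>) pol
      = (\<Sum>a\<in>UNIV. pol s a * (\<Sum>x\<in>UNIV. P s a x * Vfun P r \<gamma> pol x))"
    unfolding Vtot_def sum_step_dist_mult sum_indicator_mult ..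
  also have "(\<Sum>a\<in>UNIV. pol s a * r s a) + \<gamma> * \<dots> = (\<Sum>a\<in>UNIV. pol s a * Qfun P r \<gamma> pol s a)"
    by (simp add: Qfun_def distrib_left sum.distrib sum_distrib_left mult.left_commute)
  finally show ?thesis .
qed

lemma summable_discounted_state_dist:
  fixes \<gamma> :: real
  assumes "is_kernel P" "is_policy pol" "is_dist \<mu>" "0 \<le> \<gamma>" "\<gamma> < 1"
  shows "summable (\<lambda>t. \<gamma> ^ t * state_dist P pol \<mu> t s)"
proof (rule summable_comparison_test)
  have "0 \<le> state_dist P pol \<mu> t s" "state_dist P pol \<mu> t s \<le> 1" for t
    using assms by (auto intro: is_dist_nonneg is_dist_le_1 is_dist_state_dist)
  then show "\<exists>N. \<forall>t\<ge>N. norm (\<gamma> ^ t * state_dist P pol \<mu> t s) \<le> \<gamma> ^ t"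
    using assms by (auto simp: abs_mult intro!: mult_left_le)
  show "summable (\<lambda>t. \<gamma> ^ t)"
    using assms by (intro summable_geometric) auto
qed

lemma occ_nonneg:
  fixes \<gamma> :: real
  assumes "is_kernel P" "is_policy pol" "is_dist \<mu>" "0 \<le> \<gamma>" "\<gamma> < 1"
  shows "0 \<le> occ P \<gamma> \<mu> pol s"
  unfolding occ_def using is_dist_nonneg[OF is_dist_state_dist] assms
  by (intro mult_nonneg_nonneg suminf_nonneg summable_discounted_state_dist) auto

lemma discounted_expectation_sums_occ:
  fixes \<gamma> :: real
  assumes "is_kernel P" "is_policy pol" "is_dist \<mu>" "0 \<le> \<gamma>" "\<gamma> < 1"
  shows "(\<lambda>t. \<gamma> ^ t * (\<Sum>y\<in>UNIV. state_dist P pol \<mu> t y * h y))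
           sums (1 / (1 - \<gamma>) * (\<Sum>y\<in>UNIV. occ P \<gamma> \<mu> pol y * h y))"
proof -
  have "(\<lambda>t. \<Sum>y\<in>UNIV. h y * (\<gamma> ^ t * state_dist P pol \<mu> t y))
          sums (\<Sum>y\<in>UNIV. h y * (\<Sum>t. \<gamma> ^ t * state_dist P pol \<mu> t y))"
    using assms by (intro sums_sum sums_mult summable_sums summable_discounted_state_dist)
  then show ?thesis
    using assms(5) by (simp add: occ_def sum_distrib_left mult_ac)
qed

theorem performance_difference:
  fixes \<gamma> :: real
  assumes "is_kernel P" "is_policy pol" "is_policy pol'" "is_dist \<mu>" "0 \<le> \<gamma>" "\<gamma> < 1"
  shows "Vtot P r \<gamma> \<mu> pol' - Vtot P r \<gamma> \<mu> pol
           = 1 / (1 - \<gamma>) * (\<Sum>s\<in>UNIV. occ P \<gamma> \<mu> pol' s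
               * (\<Sum>a\<in>UNIV. pol' s a * (Qfun P r \<gamma> pol s a - Vfun P r \<gamma> pol s)))"
proof -
  let ?V = "Vfun P r \<gamma> pol"
  let ?d = "state_dist P pol' \<mu>"
  let ?A = "\<lambda>y. \<Sum>a\<in>UNIV. pol' y a * (Qfun P r \<gamma> pol y a - ?V y)"
  let ?R = "\<lambda>y. \<Sum>a\<in>UNIV. pol' y a * r y a"
  define W where "W t = \<gamma> ^ t * (\<Sum>y\<in>UNIV. ?d t y * ?V y)" for t
  have advantage: "?A y = ?R y + \<gamma> * (\<Sum>a\<in>UNIV. pol' y a * (\<Sum>x\<in>UNIV. P y a x * ?V x)) - ?V y" for y
  proof -
    have "?A y = ?R y + \<gamma> * (\<Sum>a\<in>UNIV. pol' y a * (\<Sum>x\<in>UNIV. P y a x * ?V x)) - (\<Sum>a\<in>UNIV. pol' y a) * ?V y"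
      by (simp add: Qfun_def algebra_simps sum.distrib sum_subtractf sum_distrib_left sum_distrib_right)
    with assms(3) show ?thesis by (simp add: is_policy_def is_dist_def)
  qed
  have telescoping_step:
    "\<gamma> ^ t * (\<Sum>y\<in>UNIV. ?d t y * ?A y) = \<gamma> ^ t * (\<Sum>y\<in>UNIV. ?d t y * ?R y) + (W (Suc t) - W t)" for t
  proof -
    let ?X = "\<lambda>y. \<Sum>a\<in>UNIV. pol' y a * (\<Sum>x\<in>UNIV. P y a x * ?V x)"
    have "?d t y * ?A y = ?d t y * ?R y + \<gamma> * (?d t y * ?X y) - ?d t y * ?V y" for y
      unfolding advantage by (simp add: algebra_simps)
    then have sum_A: "(\<Sum>y\<in>UNIV. ?d t y * ?A y)
        = (\<Sum>y\<in>UNIV. ?d t y * ?R y) + \<gamma> * (\<Sum>y\<in>UNIV. ?d t y * ?X y) - (\<Sum>y\<in>UNIV. ?d t y * ?V y)"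
      by (simp only: sum.distrib sum_subtractf sum_distrib_left[symmetric])
    have next_V: "(\<Sum>x\<in>UNIV. ?d (Suc t) x * ?V x) = (\<Sum>y\<in>UNIV. ?d t y * ?X y)"
      by (simp only: state_dist_Suc sum_step_dist_mult)
    show ?thesis
      unfolding W_def power_Suc next_V sum_A by (simp add: algebra_simps)
  qed
  have "W \<longlonglongrightarrow> 0"
  proof (rule Lim_null_comparison)
    show "\<forall>\<^sub>F t in sequentially. norm (W t) \<le> \<gamma> ^ t * (\<Sum>x\<in>UNIV. \<bar>?V x\<bar>)"
      using assms abs_expectation_le[OF is_dist_state_dist]
      by (intro always_eventually allI) (auto simp: W_def abs_mult intro!: mult_left_mono)
    show "(\<lambda>t. \<gamma> ^ t * (\<Sum>x\<in>UNIV. \<bar>?V x\<bar>)) \<longlonglongrightarrow> 0"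
      using assms by (intro tendsto_mult_left_zero LIMSEQ_power_zero) auto
  qed
  then have "(\<lambda>t. W (Suc t) - W t) sums (- Vtot P r \<gamma> \<mu> pol)"
    using telescope_sums by (fastforce simp: W_def Vtot_def)
  from sums_add[OF Vtot_sums[OF assms(1,3,5,6)] this]
  have "(\<lambda>t. \<gamma> ^ t * (\<Sum>y\<in>UNIV. ?d t y * ?A y)) sums (Vtot P r \<gamma> \<mu> pol' - Vtot P r \<gamma> \<mu> pol)"
    unfolding telescoping_step by simp
  moreover have "(\<lambda>t. \<gamma> ^ t * (\<Sum>y\<in>UNIV. ?d t y * ?A y))
      sums (1 / (1 - \<gamma>) * (\<Sum>s\<in>UNIV. occ P \<gamma> \<mu> pol' s * ?A s))"
    using assms by (intro discounted_expectation_sums_occ)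
  ultimately show ?thesis
    by (rule sums_unique2)
qed

lemma is_policy_reweight:
  assumes "is_policy pol" "\<And>s a. 0 < w s a"
  shows "is_policy (\<lambda>s a. pol s a * w s a / (\<Sum>a'\<in>UNIV. pol s a' * w s a'))"
proof -
  have nonneg: "0 \<le> pol s a" for s a
    using assms(1) by (simp add: is_policy_def is_dist_def)
  have positive: "0 < (\<Sum>a\<in>UNIV. pol s a * w s a)" for s
  proof -
    have "\<exists>a. pol s a \<noteq> 0"
    proof (rule ccontr)
      assume "\<not> ?thesis"
      then have "(\<Sum>a\<in>UNIV. pol s a) = 0" by simp
      with assms(1) show False by (simp add: is_policy_def is_dist_def)
    qed
    then obtain a where "0 < pol s a"
      using nonneg[of s] by (auto simp: order_less_le)
    moreover have "0 \<le> pol s i * w s i" for i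
      using nonneg[of s i] assms(2)[of s i] by simp
    ultimately show ?thesis
      using assms(2) by (intro sum_pos2[of UNIV a]) auto
  qed
  show ?thesis
    unfolding is_policy_def is_dist_def
  proof (intro allI conjI)
    fix s a
    show "0 \<le> pol s a * w s a / (\<Sum>a'\<in>UNIV. pol s a' * w s a')"
      using nonneg[of s a] assms(2)[of s a] positive[of s] by simp
  next
    fix s
    show "(\<Sum>a\<in>UNIV. pol s a * w s a / (\<Sum>a'\<in>UNIV. pol s a' * w s a')) = 1"
      using positive[of s] by (simp flip: sum_divide_distrib)
  qed
qed

lemma tilted_mean_of_centered:
  fixes p u :: "'a::finite \<Rightarrow> real" and \<eta> Z :: real
  assumes "(\<Sum>a\<in>UNIV. p a * u a) = 0"
  shows "(\<Sum>a\<in>UNIV. p a * exp (\<eta> * max (u a) 0) / Z * u a)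
           = 1 / Z * (\<Sum>i\<in>{i. u i > 0}. p i * u i * (exp (\<eta> * u i) - 1))"
proof -
  have "(\<Sum>a\<in>UNIV. p a * exp (\<eta> * max (u a) 0) / Z * u a)
      = 1 / Z * ((\<Sum>a\<in>UNIV. p a * exp (\<eta> * max (u a) 0) * u a) - (\<Sum>a\<in>UNIV. p a * u a))"
    using assms by (simp add: sum_distrib_left)
  also have "(\<Sum>a\<in>UNIV. p a * exp (\<eta> * max (u a) 0) * u a) - (\<Sum>a\<in>UNIV. p a * u a)
      = (\<Sum>a\<in>UNIV. if u a > 0 then p a * u a * (exp (\<eta> * u a) - 1) else 0)"
    by (subst sum_subtractf[symmetric], rule sum.cong) (auto simp: algebra_simps)
  also have "\<dots> = (\<Sum>i\<in>{i. u i > 0}. p i * u i * (exp (\<eta> * u i) - 1))"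
    by (simp add: sum.inter_filter[symmetric])
  finally show ?thesis .
qed

lemma sum_positive_part_exp_gain_nonneg:
  fixes p u :: "'a \<Rightarrow> real" and \<eta> :: real
  assumes "\<And>i. 0 \<le> p i" "0 \<le> \<eta>"
  shows "0 \<le> (\<Sum>i\<in>{i. u i > 0}. p i * u i * (exp (\<eta> * u i) - 1))"
  using assms by (intro sum_nonneg mult_nonneg_nonneg) auto

theorem lemma7:
  fixes P :: "'s::finite \<Rightarrow> 'a::finite \<Rightarrow> 's \<Rightarrow> real"
    and r :: "'s \<Rightarrow> 'a \<Rightarrow> real"
    and \<gamma> \<eta> :: real
    and \<rho> :: "'s \<Rightarrow> real"
    and \<pi> \<pi>' :: "'s \<Rightarrow> 'a \<Rightarrow> real"
    and U f :: "'a \<Rightarrow> 's \<Rightarrow> real"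
    and Z :: "'s \<Rightarrow> real"
  assumes "is_kernel P"
    and "is_dist \<rho>"
    and "0 \<le> \<gamma>" and "\<gamma> < 1"
    and "is_policy \<pi>"
    and "\<And>s a. 0 < \<pi> s a"
    and "0 < \<eta>"
    and U_def: "\<And>a s. U a s = Qfun P r \<gamma> \<pi> s a - Vfun P r \<gamma> \<pi> s"
    and f_def: "\<And>a s. f a s = max (U a s) 0"
    and Z_def: "\<And>s. Z s = (\<Sum>a'\<in>UNIV. \<pi> s a' * exp (\<eta> * f a' s))"
    and pi'_def: "\<And>s a. \<pi>' s a = \<pi> s a * exp (\<eta> * f a s) / Z s"
  shows "Vtot P r \<gamma> \<rho> \<pi>' - Vtot P r \<gamma> \<rho> \<pi>
           = 1 / (1 - \<gamma>) * (\<Sum>s\<in>UNIV. occ P \<gamma> \<rho> \<pi>' s * (1 / Z s) *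
               (\<Sum>i\<in>{i. U i s > 0}. \<pi> s i * U i s * (exp (\<eta> * U i s) - 1)))
       \<and> 1 / (1 - \<gamma>) * (\<Sum>s\<in>UNIV. occ P \<gamma> \<rho> \<pi>' s * (1 / Z s) *
               (\<Sum>i\<in>{i. U i s > 0}. \<pi> s i * U i s * (exp (\<eta> * U i s) - 1))) \<ge> 0"
proof -
  let ?S = "\<lambda>s. \<Sum>i\<in>{i. U i s > 0}. \<pi> s i * U i s * (exp (\<eta> * U i s) - 1)"
  have "\<pi>' = (\<lambda>s a. \<pi> s a * exp (\<eta> * f a s) / (\<Sum>a'\<in>UNIV. \<pi> s a' * exp (\<eta> * f a' s)))"
    by (intro ext) (simp add: pi'_def Z_def)
  then have policy': "is_policy \<pi>'"
    using assms(5) by (simp add: is_policy_reweight)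
  have centered: "(\<Sum>a\<in>UNIV. \<pi> s a * U a s) = 0" for s
    using Vfun_eq_sum_Qfun[OF assms(1,5,3,4), of r s] assms(5)
    by (simp add: U_def right_diff_distrib sum_subtractf is_policy_def is_dist_def flip: sum_distrib_right)
  have "Vtot P r \<gamma> \<rho> \<pi>' - Vtot P r \<gamma> \<rho> \<pi>
      = 1 / (1 - \<gamma>) * (\<Sum>s\<in>UNIV. occ P \<gamma> \<rho> \<pi>' s * (\<Sum>a\<in>UNIV. \<pi>' s a * U a s))"
    using performance_difference[OF assms(1,5) policy' assms(2-4)] by (simp add: U_def)
  also have "\<dots> = 1 / (1 - \<gamma>) * (\<Sum>s\<in>UNIV. occ P \<gamma> \<rho> \<pi>' s * (1 / Z s) * ?S s)"
    using tilted_mean_of_centered[OF centered] by (simp add: pi'_def f_def mult.assoc)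
  moreover have "0 \<le> 1 / (1 - \<gamma>) * (\<Sum>s\<in>UNIV. occ P \<gamma> \<rho> \<pi>' s * (1 / Z s) * ?S s)"
  proof -
    have "0 \<le> Z s" for s
      unfolding Z_def using assms(6) by (intro sum_nonneg) (simp add: less_imp_le)
    moreover have "0 \<le> ?S s" for s
      using assms(6,7) by (intro sum_positive_part_exp_gain_nonneg) (auto intro: less_imp_le)
    ultimately have "0 \<le> occ P \<gamma> \<rho> \<pi>' s * (1 / Z s) * ?S s" for s
      using occ_nonneg[OF assms(1) policy' assms(2-4)] by simp
    then show ?thesis
      using assms(4) by (simp add: sum_nonneg)
  qed
  ultimately show ?thesis by simp
qed

end
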